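(* Let $A_1$, $A_2$ be distinct minimal ideals of a finite-dimensional Lie algebra $L$ over a field $F$. Then there is a bijection \[ \theta : \{A_1, (A_1+A_2)/A_1\} \to \{A_2, (A_1+A_2)/A_2\} \] (regarding $A_i$ as the chief factor $A_i/0$) such that each chief factor is isomorphic as an $L$-module to its image, and a chief factor in the domain is a Frattini chief factor if and only if its image under $\theta$ is a Frattini chief factor.
   Context: A chief factor of $L$ is a quotient $A/B$ of ideals $B\subsetneq A$ with no ideal of $L$ strictly between them. The Frattini ideal $\phi(L)$ is the largest ideal of $L$ contained in the intersection of all maximal subalgebras of $L$. A chief factor $A/B$ is a Frattini chief factor if $A/B \subseteq \phi(L/B)$. *)

theory Defs
  imports Complex_Main
begin

text \<open>A Lie algebra L over a field 'k is modelled as the whole type 'v (an abelian group)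
  with scalar multiplication sc and bracket br.\<close>

definition lie_algebra :: "('k::field \<Rightarrow> 'v::ab_group_add \<Rightarrow> 'v) \<Rightarrow> ('v \<Rightarrow> 'v \<Rightarrow> 'v) \<Rightarrow> bool" where
  "lie_algebra sc br \<longleftrightarrow> vector_space sc
     \<and> (\<forall>x y z. br (x + y) z = br x z + br y z)
     \<and> (\<forall>x y z. br x (y + z) = br x y + br x z)
     \<and> (\<forall>c x y. br (sc c x) y = sc c (br x y))
     \<and> (\<forall>c x y. br x (sc c y) = sc c (br x y))
     \<and> (\<forall>x. br x x = 0)
     \<and> (\<forall>x y z. br x (br y z) + br y (br z x) + br z (br x y) = 0)"

definition fin_dim :: "('k::field \<Rightarrow> 'v::ab_group_add \<Rightarrow> 'v) \<Rightarrow> bool" where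
  "fin_dim sc \<longleftrightarrow> (\<exists>B. finite B \<and> module.span sc B = UNIV)"

definition lie_subalgebra :: "('k::field \<Rightarrow> 'v::ab_group_add \<Rightarrow> 'v) \<Rightarrow> ('v \<Rightarrow> 'v \<Rightarrow> 'v) \<Rightarrow> 'v set \<Rightarrow> bool" where
  "lie_subalgebra sc br S \<longleftrightarrow> module.subspace sc S \<and> (\<forall>x\<in>S. \<forall>y\<in>S. br x y \<in> S)"

definition lie_ideal :: "('k::field \<Rightarrow> 'v::ab_group_add \<Rightarrow> 'v) \<Rightarrow> ('v \<Rightarrow> 'v \<Rightarrow> 'v) \<Rightarrow> 'v set \<Rightarrow> bool" where
  "lie_ideal sc br I \<longleftrightarrow> module.subspace sc I \<and> (\<forall>x. \<forall>y\<in>I. br x y \<in> I)"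

definition chief_factor :: "('k::field \<Rightarrow> 'v::ab_group_add \<Rightarrow> 'v) \<Rightarrow> ('v \<Rightarrow> 'v \<Rightarrow> 'v) \<Rightarrow> 'v set \<times> 'v set \<Rightarrow> bool" where
  "chief_factor sc br AB \<longleftrightarrow> (case AB of (A, B) \<Rightarrow>
     lie_ideal sc br A \<and> lie_ideal sc br B \<and> B \<subset> A \<and>
     \<not> (\<exists>C. lie_ideal sc br C \<and> B \<subset> C \<and> C \<subset> A))"

definition minimal_ideal :: "('k::field \<Rightarrow> 'v::ab_group_add \<Rightarrow> 'v) \<Rightarrow> ('v \<Rightarrow> 'v \<Rightarrow> 'v) \<Rightarrow> 'v set \<Rightarrow> bool" where
  "minimal_ideal sc br A \<longleftrightarrow> lie_ideal sc br A \<and> A \<noteq> {0} \<and>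
     \<not> (\<exists>C. lie_ideal sc br C \<and> {0} \<subset> C \<and> C \<subset> A)"

definition set_plus_v :: "'v::ab_group_add set \<Rightarrow> 'v set \<Rightarrow> 'v set" where
  "set_plus_v A B = {a + b | a b. a \<in> A \<and> b \<in> B}"

text \<open>Maximal subalgebras of L/B correspond to subalgebras M of L with B \<subseteq> M \<noteq> L that are
  maximal among such (M/B is then a maximal subalgebra of L/B).\<close>
definition max_subalg_over :: "('k::field \<Rightarrow> 'v::ab_group_add \<Rightarrow> 'v) \<Rightarrow> ('v \<Rightarrow> 'v \<Rightarrow> 'v) \<Rightarrow> 'v set \<Rightarrow> 'v set \<Rightarrow> bool" where
  "max_subalg_over sc br B M \<longleftrightarrow> lie_subalgebra sc br M \<and> B \<subseteq> M \<and> M \<noteq> UNIV \<and>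
     (\<forall>N. lie_subalgebra sc br N \<and> M \<subseteq> N \<and> N \<noteq> UNIV \<longrightarrow> N = M)"

text \<open>Preimage in L of the Frattini ideal phi(L/B): the largest ideal of L containing B that is
  contained in every maximal subalgebra of L containing B (taken as the union of all such ideals).\<close>
definition frattini_over :: "('k::field \<Rightarrow> 'v::ab_group_add \<Rightarrow> 'v) \<Rightarrow> ('v \<Rightarrow> 'v \<Rightarrow> 'v) \<Rightarrow> 'v set \<Rightarrow> 'v set" where
  "frattini_over sc br B = \<Union>{I. lie_ideal sc br I \<and> B \<subseteq> I \<and>
       (\<forall>M. max_subalg_over sc br B M \<longrightarrow> I \<subseteq> M)}"

definition frattini_chief_factor :: "('k::field \<Rightarrow> 'v::ab_group_add \<Rightarrow> 'v) \<Rightarrow> ('v \<Rightarrow> 'v \<Rightarrow> 'v) \<Rightarrow> 'v set \<times> 'v set \<Rightarrow> bool" where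
  "frattini_chief_factor sc br AB \<longleftrightarrow> (case AB of (A, B) \<Rightarrow>
     chief_factor sc br (A, B) \<and> A \<subseteq> frattini_over sc br B)"

text \<open>A/B and C/D are isomorphic as L-modules: there is a linear map f: A \<rightarrow> C with f(B) \<subseteq> D
  inducing a bijective L-module map A/B \<rightarrow> C/D.\<close>
definition factor_iso :: "('k::field \<Rightarrow> 'v::ab_group_add \<Rightarrow> 'v) \<Rightarrow> ('v \<Rightarrow> 'v \<Rightarrow> 'v) \<Rightarrow> 'v set \<times> 'v set \<Rightarrow> 'v set \<times> 'v set \<Rightarrow> bool" where
  "factor_iso sc br AB CD \<longleftrightarrow> (case AB of (A, B) \<Rightarrow> case CD of (C, D) \<Rightarrow>
     (\<exists>f. (\<forall>x\<in>A. f x \<in> C)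
        \<and> (\<forall>x\<in>A. \<forall>y\<in>A. f (x + y) = f x + f y)
        \<and> (\<forall>c. \<forall>x\<in>A. f (sc c x) = sc c (f x))
        \<and> (\<forall>x\<in>B. f x \<in> D)
        \<and> (\<forall>x\<in>A. f x \<in> D \<longrightarrow> x \<in> B)
        \<and> (\<forall>y\<in>C. \<exists>x\<in>A. y - f x \<in> D)
        \<and> (\<forall>z. \<forall>x\<in>A. f (br z x) - br z (f x) \<in> D)))"

end

theory Submission
  imports Defs
begin

text \<open>
  Distinct minimal ideals \<open>A\<^sub>1\<close>, \<open>A\<^sub>2\<close> meet in 0 and commute, so
  \<open>A\<^sub>1 \<cong> (A\<^sub>1+A\<^sub>2)/A\<^sub>2\<close> and \<open>(A\<^sub>1+A\<^sub>2)/A\<^sub>1 \<cong> A\<^sub>2\<close>. The factor \<open>A\<^sub>i/0\<close> is Frattini iff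
  \<open>A\<^sub>i\<close> lies in every maximal subalgebra, and \<open>(A\<^sub>1+A\<^sub>2)/A\<^sub>2\<close> is Frattini iff \<open>A\<^sub>1\<close> lies in
  every maximal subalgebra containing \<open>A\<^sub>2\<close>. If this crossed pairing respects the Frattini
  property we are done. Otherwise, say, \<open>A\<^sub>1\<close> lies in every maximal subalgebra containing \<open>A\<^sub>2\<close>
  but not in some maximal subalgebra \<open>M\<close>; then \<open>M\<close> complements both \<open>A\<^sub>1\<close> and \<open>A\<^sub>2\<close>.
  Moreover \<open>A\<^sub>1\<close> is abelian: for \<open>x \<in> A\<^sub>1\<close> the Fitting null component of \<open>ad x\<close> contains
  \<open>A\<^sub>2\<close> and together with \<open>A\<^sub>1\<close> spans \<open>L\<close>, so it cannot lie in a maximal subalgebra, hence is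
  \<open>L\<close>; by Engel's theorem \<open>A\<^sub>1\<close> has a nonzero element centralising \<open>A\<^sub>1\<close>, and the centre
  of \<open>A\<^sub>1\<close> is an ideal. Then \<open>A\<^sub>2\<close> is abelian as well, projection along \<open>M\<close> gives
  \<open>A\<^sub>1 \<cong> A\<^sub>2\<close>, neither \<open>A\<^sub>i/0\<close> is Frattini and both quotients of \<open>A\<^sub>1+A\<^sub>2\<close> are, so the
  straight pairing works.
\<close>

lemma mem_set_plus_v: "z \<in> set_plus_v A B \<longleftrightarrow> (\<exists>a\<in>A. \<exists>b\<in>B. z = a + b)"
  by (auto simp: set_plus_v_def)

lemma set_plus_v_commute: "set_plus_v A B = set_plus_v B A"
  by (auto simp: mem_set_plus_v) (metis add.commute)+

lemma subset_set_plus_v: "0 \<in> B \<Longrightarrow> A \<subseteq> set_plus_v A B"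
  by (force simp: mem_set_plus_v)

lemma set_plus_v_UNIV_decompose:
  assumes "set_plus_v A B = UNIV"
  obtains a b where "a \<in> A" "b \<in> B" "z = a + b"
proof -
  have "z \<in> set_plus_v A B"
    using assms by simp
  then show ?thesis
    using that unfolding mem_set_plus_v by blast
qed

lemma additive_on_diff:
  fixes g :: "'a::ab_group_add \<Rightarrow> 'b::ab_group_add"
  assumes "\<forall>x\<in>C. \<forall>y\<in>C. g (x + y) = g x + g y" "u - v \<in> C" "v \<in> C"
  shows "g (u - v) = g u - g v"
proof -
  have "g ((u - v) + v) = g (u - v) + g v"
    using assms(1)[rule_format, OF assms(2,3)] .
  then show ?thesis
    by (simp add: eq_diff_eq)
qed

lemma bij_betw_pair:
  assumes "a \<noteq> b" "c \<noteq> d" "R a c" "R b d"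
  shows "\<exists>\<theta>. bij_betw \<theta> {a, b} {c, d} \<and> (\<forall>p\<in>{a, b}. R p (\<theta> p))"
proof (intro exI conjI)
  let ?\<theta> = "\<lambda>p. if p = a then c else d"
  show "bij_betw ?\<theta> {a, b} {c, d}"
    using assms(1,2) by (auto simp: bij_betw_def inj_on_def)
  show "\<forall>p\<in>{a, b}. R p (?\<theta> p)"
    using assms by auto
qed

lemma funpow_leaves_subset:
  assumes "w \<in> W" "w \<notin> U" "(f ^^ n) w \<in> U" "\<forall>v\<in>W. f v \<in> W"
  shows "\<exists>v\<in>W. v \<notin> U \<and> f v \<in> U"
  using assms(1-3)
proof (induction n arbitrary: w)
  case 0
  then show ?case by simp
next
  case (Suc n)
  show ?case
  proof (cases "f w \<in> U")
    case True
    then show ?thesis using Suc.prems by blast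
  next
    case False
    have "(f ^^ n) (f w) \<in> U" using Suc.prems(3) by (simp add: funpow_Suc_right del: funpow.simps)
    then show ?thesis using Suc.IH[of "f w"] False Suc.prems(1) assms(4) by blast
  qed
qed

locale lie_alg = vector_space sc for sc :: "'k::field \<Rightarrow> 'v::ab_group_add \<Rightarrow> 'v" +
  fixes br :: "'v \<Rightarrow> 'v \<Rightarrow> 'v"
  assumes bracket_add_left: "br (x + y) z = br x z + br y z"
    and bracket_add_right: "br x (y + z) = br x y + br x z"
    and bracket_scale_left: "br (sc c x) y = sc c (br x y)"
    and bracket_scale_right: "br x (sc c y) = sc c (br x y)"
    and bracket_self: "br x x = 0"
    and jacobi: "br x (br y z) + br y (br z x) + br z (br x y) = 0"
begin

lemma module_hom_bracket_left: "module_hom sc sc (\<lambda>x. br x y)"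
  by (simp add: module_hom_iff module_axioms bracket_add_left bracket_scale_left)

lemma module_hom_ad_pow: "module_hom sc sc (br x ^^ n)"
  by (induction n) (simp_all add: module_hom_iff module_axioms bracket_add_right bracket_scale_right)

lemma module_hom_ad: "module_hom sc sc (br x)"
  using module_hom_ad_pow[where n=1] by simp

lemmas ad_pow_add = module_hom.add[OF module_hom_ad_pow]
  and ad_pow_scale = module_hom.scale[OF module_hom_ad_pow]
  and ad_pow_zero [simp] = module_hom.zero[OF module_hom_ad_pow]
  and ad_pow_diff = module_hom.diff[OF module_hom_ad_pow]
  and bracket_minus_right = module_hom.neg[OF module_hom_ad]

lemma bracket_zero_left [simp]: "br 0 y = 0"
  using module_hom.zero[OF module_hom_bracket_left] .

lemma bracket_zero_right [simp]: "br x 0 = 0"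
  using module_hom.zero[OF module_hom_ad] .

lemma bracket_antisym: "br y x = - br x y"
proof -
  have "br x y + br y x = br (x + y) (x + y)"
    unfolding bracket_add_left bracket_add_right by (simp add: bracket_self add.commute)
  then have "br x y + br y x = 0"
    by (simp only: bracket_self)
  then show ?thesis by (metis neg_eq_iff_add_eq_0)
qed

lemma bracket_leibniz: "br x (br y z) = br (br x y) z + br y (br x z)"
proof -
  have "br y (br z x) = - br y (br x z)" "br z (br x y) = - br (br x y) z"
    by (simp_all add: bracket_antisym[of x z] bracket_minus_right bracket_antisym[of "br x y" z])
  then show ?thesis using jacobi[of x y z] by (simp add: algebra_simps)
qed

subsection \<open>Ideals, minimal ideals and chief factors\<close>

lemma lie_ideal_subspace: "lie_ideal sc br I \<Longrightarrow> subspace I"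
  by (simp add: lie_ideal_def)

lemma lie_ideal_bracket_mem: "lie_ideal sc br I \<Longrightarrow> y \<in> I \<Longrightarrow> br x y \<in> I"
  by (simp add: lie_ideal_def)

lemma lie_ideal_bracket_mem_left: "lie_ideal sc br I \<Longrightarrow> y \<in> I \<Longrightarrow> br y x \<in> I"
  by (metis bracket_antisym lie_ideal_bracket_mem lie_ideal_subspace subspace_neg)

lemma lie_ideal_subalgebra: "lie_ideal sc br I \<Longrightarrow> lie_subalgebra sc br I"
  by (simp add: lie_ideal_def lie_subalgebra_def)

lemma lie_subalgebra_subspace: "lie_subalgebra sc br S \<Longrightarrow> subspace S"
  by (simp add: lie_subalgebra_def)

lemma lie_subalgebra_bracket_mem: "lie_subalgebra sc br S \<Longrightarrow> x \<in> S \<Longrightarrow> y \<in> S \<Longrightarrow> br x y \<in> S"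
  by (simp add: lie_subalgebra_def)

lemma lie_ideal_Int: "lie_ideal sc br A \<Longrightarrow> lie_ideal sc br B \<Longrightarrow> lie_ideal sc br (A \<inter> B)"
  by (simp add: lie_ideal_def subspace_inter)

lemma lie_subalgebra_Int:
  "lie_subalgebra sc br A \<Longrightarrow> lie_subalgebra sc br B \<Longrightarrow> lie_subalgebra sc br (A \<inter> B)"
  by (simp add: lie_subalgebra_def subspace_inter)

lemma subspace_set_plus_v: "subspace A \<Longrightarrow> subspace B \<Longrightarrow> subspace (set_plus_v A B)"
  unfolding set_plus_v_def by (rule subspace_sums)

lemma set_plus_v_subset: "subspace C \<Longrightarrow> A \<subseteq> C \<Longrightarrow> B \<subseteq> C \<Longrightarrow> set_plus_v A B \<subseteq> C"
  by (force simp: mem_set_plus_v intro: subspace_add)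

lemma lie_subalgebra_set_plus_v:
  assumes X: "lie_ideal sc br X" and S: "lie_subalgebra sc br S"
  shows "lie_subalgebra sc br (set_plus_v X S)"
  unfolding lie_subalgebra_def
proof (intro conjI ballI)
  show "subspace (set_plus_v X S)"
    using X S by (simp add: subspace_set_plus_v lie_ideal_subspace lie_subalgebra_subspace)
  fix u v assume "u \<in> set_plus_v X S" "v \<in> set_plus_v X S"
  then obtain a b a' b' where u: "a \<in> X" "b \<in> S" "u = a + b" and v: "a' \<in> X" "b' \<in> S" "v = a' + b'"
    by (auto simp: mem_set_plus_v)
  have "br u v = (br a v + br b a') + br b b'"
    using u v by (simp add: bracket_add_left bracket_add_right add.assoc)
  moreover have "br a v + br b a' \<in> X"
    using X u v by (simp add: lie_ideal_bracket_mem lie_ideal_bracket_mem_left subspace_add lie_ideal_subspace)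
  moreover have "br b b' \<in> S"
    using S u v by (simp add: lie_subalgebra_bracket_mem)
  ultimately show "br u v \<in> set_plus_v X S"
    unfolding mem_set_plus_v by blast
qed

lemma lie_ideal_set_plus_v:
  assumes A: "lie_ideal sc br A" and B: "lie_ideal sc br B"
  shows "lie_ideal sc br (set_plus_v A B)"
  unfolding lie_ideal_def
proof (intro conjI allI ballI)
  show "subspace (set_plus_v A B)"
    using A B by (simp add: subspace_set_plus_v lie_ideal_subspace)
  fix x y assume "y \<in> set_plus_v A B"
  then obtain a b where "a \<in> A" "b \<in> B" "y = a + b"
    by (auto simp: mem_set_plus_v)
  moreover from this have "br x y = br x a + br x b"
    by (simp add: bracket_add_right)
  ultimately show "br x y \<in> set_plus_v A B"
    using A B unfolding mem_set_plus_v by (blast intro: lie_ideal_bracket_mem)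
qed

lemma lie_ideals_Int_zero_commute:
  assumes "lie_ideal sc br X" "lie_ideal sc br Y" "X \<inter> Y = {0}" "a \<in> X" "b \<in> Y"
  shows "br a b = 0"
  using assms lie_ideal_bracket_mem lie_ideal_bracket_mem_left by blast

definition abelian :: "'v set \<Rightarrow> bool" where
  "abelian X \<longleftrightarrow> (\<forall>a\<in>X. \<forall>b\<in>X. br a b = 0)"

lemma minimal_ideal_lie_ideal: "minimal_ideal sc br X \<Longrightarrow> lie_ideal sc br X"
  by (simp add: minimal_ideal_def)

lemma minimal_ideal_subspace: "minimal_ideal sc br X \<Longrightarrow> subspace X"
  by (simp add: minimal_ideal_def lie_ideal_subspace)

lemma minimal_ideal_Int_cases:
  assumes X: "minimal_ideal sc br X" and C: "lie_ideal sc br C"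
  shows "X \<inter> C = {0} \<or> X \<subseteq> C"
proof -
  have "lie_ideal sc br (X \<inter> C)"
    using X C by (simp add: lie_ideal_Int minimal_ideal_lie_ideal)
  moreover have "{0} \<subseteq> X \<inter> C"
    using calculation lie_ideal_subspace subspace_0 by blast
  ultimately show ?thesis
    using X unfolding minimal_ideal_def by blast
qed

lemma minimal_ideals_Int:
  assumes X: "minimal_ideal sc br X" and Y: "minimal_ideal sc br Y" and "X \<noteq> Y"
  shows "X \<inter> Y = {0}"
  using minimal_ideal_Int_cases[OF X minimal_ideal_lie_ideal[OF Y]]
    minimal_ideal_Int_cases[OF Y minimal_ideal_lie_ideal[OF X]] assms
  unfolding minimal_ideal_def by blast

lemma minimal_ideals_commute:
  "minimal_ideal sc br X \<Longrightarrow> minimal_ideal sc br Y \<Longrightarrow> X \<noteq> Y \<Longrightarrow> a \<in> X \<Longrightarrow> b \<in> Y \<Longrightarrow> br a b = 0"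
  by (metis lie_ideals_Int_zero_commute minimal_ideal_lie_ideal minimal_ideals_Int)

lemma chief_factor_minimal_ideal: "minimal_ideal sc br X \<Longrightarrow> chief_factor sc br (X, {0})"
  unfolding chief_factor_def minimal_ideal_def by (auto simp: lie_ideal_def subspace_0)

lemma lie_ideal_between_set_plus_v:
  assumes Y: "minimal_ideal sc br Y" and C: "lie_ideal sc br C"
    and "X \<subseteq> C" "C \<subseteq> set_plus_v X Y"
  shows "C = X \<or> C = set_plus_v X Y"
proof (cases "Y \<subseteq> C")
  case True
  then have "set_plus_v X Y \<subseteq> C"
    using assms(3) C by (simp add: set_plus_v_subset lie_ideal_subspace)
  then show ?thesis
    using assms(4) by blast
next
  case False
  then have YC: "Y \<inter> C = {0}"
    using minimal_ideal_Int_cases[OF Y C] by blast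
  have "c \<in> X" if c: "c \<in> C" for c
  proof -
    have "c \<in> set_plus_v X Y"
      using c assms(4) by blast
    then obtain a b where ab: "a \<in> X" "b \<in> Y" "c = a + b"
      unfolding mem_set_plus_v by blast
    then have "c - a \<in> C"
      using c assms(3) C by (blast intro: subspace_diff lie_ideal_subspace)
    then have "b = 0"
      using ab YC by auto
    then show ?thesis
      using ab by simp
  qed
  then show ?thesis
    using assms(3) by blast
qed

lemma chief_factor_set_plus_v:
  assumes X: "minimal_ideal sc br X" and Y: "minimal_ideal sc br Y" and "X \<noteq> Y"
  shows "chief_factor sc br (set_plus_v X Y, X)"
proof -
  note subspaces = minimal_ideal_subspace[OF X] minimal_ideal_subspace[OF Y]
  have "X \<subseteq> set_plus_v X Y" "Y \<subseteq> set_plus_v X Y"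
    using subspaces by (metis subset_set_plus_v set_plus_v_commute subspace_0)+
  moreover have "\<not> Y \<subseteq> X"
    using minimal_ideals_Int[OF assms] Y unfolding minimal_ideal_def by blast
  ultimately have "X \<subset> set_plus_v X Y"
    by blast
  then show ?thesis
    unfolding chief_factor_def
    using lie_ideal_between_set_plus_v[OF Y] minimal_ideal_lie_ideal[OF X] minimal_ideal_lie_ideal[OF Y]
    by (auto simp: lie_ideal_set_plus_v)
qed

subsection \<open>Maximal subalgebras and Frattini chief factors\<close>

definition maximal_subalgebra :: "'v set \<Rightarrow> bool" where
  "maximal_subalgebra M \<longleftrightarrow> lie_subalgebra sc br M \<and> M \<noteq> UNIV \<and>
     (\<forall>N. lie_subalgebra sc br N \<and> M \<subseteq> N \<and> N \<noteq> UNIV \<longrightarrow> N = M)"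

lemma max_subalg_over_iff: "max_subalg_over sc br B M \<longleftrightarrow> maximal_subalgebra M \<and> B \<subseteq> M"
  unfolding max_subalg_over_def maximal_subalgebra_def by blast

lemma maximal_subalgebra_subalgebra: "maximal_subalgebra M \<Longrightarrow> lie_subalgebra sc br M"
  by (simp add: maximal_subalgebra_def)

lemma maximal_subalgebra_subspace: "maximal_subalgebra M \<Longrightarrow> subspace M"
  by (simp add: maximal_subalgebra_def lie_subalgebra_subspace)

lemma maximal_subalgebra_set_plus_v:
  assumes M: "maximal_subalgebra M" and X: "lie_ideal sc br X" and "\<not> X \<subseteq> M"
  shows "set_plus_v X M = UNIV"
proof -
  have "M \<subseteq> set_plus_v X M" "X \<subseteq> set_plus_v X M"
    using M X subset_set_plus_v set_plus_v_commute
    by (metis lie_ideal_subspace maximal_subalgebra_subspace subspace_0)+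
  moreover have "lie_subalgebra sc br (set_plus_v X M)"
    using lie_subalgebra_set_plus_v[OF X maximal_subalgebra_subalgebra[OF M]] .
  ultimately show ?thesis
    using M \<open>\<not> X \<subseteq> M\<close> unfolding maximal_subalgebra_def by blast
qed

definition in_maximals_over :: "'v set \<Rightarrow> 'v set \<Rightarrow> bool" where
  "in_maximals_over B A \<longleftrightarrow> (\<forall>M. maximal_subalgebra M \<longrightarrow> B \<subseteq> M \<longrightarrow> A \<subseteq> M)"

lemma in_maximals_over_mono: "B \<subseteq> B' \<Longrightarrow> in_maximals_over B A \<Longrightarrow> in_maximals_over B' A"
  unfolding in_maximals_over_def by blast

lemma frattini_chief_factor_iff:
  assumes "chief_factor sc br (A, B)"
  shows "frattini_chief_factor sc br (A, B) \<longleftrightarrow> in_maximals_over B A"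
proof -
  have "lie_ideal sc br A" "B \<subseteq> A"
    using assms unfolding chief_factor_def by auto
  then have "A \<subseteq> frattini_over sc br B \<longleftrightarrow> in_maximals_over B A"
    unfolding frattini_over_def in_maximals_over_def max_subalg_over_iff by blast
  then show ?thesis
    using assms unfolding frattini_chief_factor_def by simp
qed

lemma frattini_chief_factor_minimal_ideal_iff:
  "minimal_ideal sc br X \<Longrightarrow> frattini_chief_factor sc br (X, {0}) \<longleftrightarrow> in_maximals_over {0} X"
  by (simp add: frattini_chief_factor_iff chief_factor_minimal_ideal)

lemma frattini_chief_factor_set_plus_v_iff:
  assumes X: "minimal_ideal sc br X" and Y: "minimal_ideal sc br Y" and "X \<noteq> Y"
  shows "frattini_chief_factor sc br (set_plus_v X Y, Y) \<longleftrightarrow> in_maximals_over Y X"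
proof -
  have "chief_factor sc br (set_plus_v X Y, Y)"
    using chief_factor_set_plus_v[OF Y X] assms by (simp add: set_plus_v_commute)
  moreover have "set_plus_v X Y \<subseteq> M \<longleftrightarrow> X \<subseteq> M" if "maximal_subalgebra M" "Y \<subseteq> M" for M
    using that set_plus_v_subset maximal_subalgebra_subspace subset_set_plus_v
    by (metis minimal_ideal_subspace[OF Y] subspace_0 dual_order.trans)
  ultimately show ?thesis
    by (simp add: frattini_chief_factor_iff in_maximals_over_def)
qed

subsection \<open>Adjoint powers and Fitting null components\<close>

lemma ad_pow_eq_zero_mono: "(br x ^^ n) u = 0 \<Longrightarrow> n \<le> m \<Longrightarrow> (br x ^^ m) u = 0"
  by (metis le_add_diff_inverse2 funpow_add comp_apply ad_pow_zero)

lemma ad_pow_bracket_eq_zero: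
  "(br x ^^ a) y = 0 \<Longrightarrow> (br x ^^ b) z = 0 \<Longrightarrow> a + b \<le> n \<Longrightarrow> (br x ^^ n) (br y z) = 0"
proof (induction n arbitrary: a b y z)
  case 0
  then show ?case by simp
next
  case (Suc n)
  show ?case
  proof (cases "a = 0 \<or> b = 0")
    case True
    then show ?thesis using Suc.prems by auto
  next
    case False
    then obtain a' b' where ab: "a = Suc a'" "b = Suc b'"
      by (metis not0_implies_Suc)
    have y': "(br x ^^ a') (br x y) = 0" and z': "(br x ^^ b') (br x z) = 0"
      using Suc.prems(1,2) ab by (simp_all add: funpow_Suc_right del: funpow.simps)
    have "(br x ^^ n) (br (br x y) z) = 0" "(br x ^^ n) (br y (br x z)) = 0"
      using Suc.IH[OF y' Suc.prems(2)] Suc.IH[OF Suc.prems(1) z'] Suc.prems(3) ab by simp_all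
    then show ?thesis
      unfolding funpow_Suc_right comp_apply bracket_leibniz[of x y z] ad_pow_add by simp
  qed
qed

definition fitting_null :: "'v \<Rightarrow> 'v set" where
  "fitting_null x = {y. \<exists>n. (br x ^^ n) y = 0}"

lemma lie_subalgebra_fitting_null: "lie_subalgebra sc br (fitting_null x)"
  unfolding lie_subalgebra_def
proof (intro conjI ballI)
  show "subspace (fitting_null x)"
  proof (rule subspaceI)
    show "0 \<in> fitting_null x"
      by (simp add: fitting_null_def)
  next
    fix u v assume "u \<in> fitting_null x" "v \<in> fitting_null x"
    then obtain n m where "(br x ^^ n) u = 0" "(br x ^^ m) v = 0"
      by (auto simp: fitting_null_def)
    then have "(br x ^^ (n + m)) (u + v) = 0"
      by (simp add: ad_pow_add ad_pow_eq_zero_mono)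
    then show "u + v \<in> fitting_null x"
      unfolding fitting_null_def by blast
  next
    fix c u assume "u \<in> fitting_null x"
    then show "sc c u \<in> fitting_null x"
      by (auto simp: fitting_null_def ad_pow_scale)
  qed
next
  fix u v assume "u \<in> fitting_null x" "v \<in> fitting_null x"
  then obtain n m where "(br x ^^ n) u = 0" "(br x ^^ m) v = 0"
    by (auto simp: fitting_null_def)
  then have "(br x ^^ (n + m)) (br u v) = 0"
    by (rule ad_pow_bracket_eq_zero) simp
  then show "br u v \<in> fitting_null x"
    unfolding fitting_null_def by blast
qed

lemma lie_subalgebra_add_normalizing:
  assumes H: "lie_subalgebra sc br H" and y: "\<forall>h\<in>H. br h y \<in> H"
  shows "lie_subalgebra sc br (set_plus_v H (span {y}))"
  unfolding lie_subalgebra_def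
proof (intro conjI ballI)
  note sH = lie_subalgebra_subspace[OF H]
  show "subspace (set_plus_v H (span {y}))"
    using sH by (simp add: subspace_set_plus_v)
  fix u v assume "u \<in> set_plus_v H (span {y})" "v \<in> set_plus_v H (span {y})"
  then obtain h c h' c' where u: "h \<in> H" "u = h + sc c y" and v: "h' \<in> H" "v = h' + sc c' y"
    by (auto simp: mem_set_plus_v span_singleton)
  have "br u v = br h h' + sc c' (br h y) - sc c (br h' y)"
    using u v by (simp add: bracket_add_left bracket_add_right bracket_scale_left bracket_scale_right
        bracket_self bracket_antisym[of y h'] scale_minus_right)
  also have "\<dots> \<in> H"
    using H y u v sH by (simp add: lie_subalgebra_bracket_mem subspace_add subspace_diff subspace_scale)
  finally show "br u v \<in> set_plus_v H (span {y})"
    using subset_set_plus_v[OF span_zero] by blast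
qed

lemma bracket_annihilator_invariant:
  assumes U: "subspace U" and y: "\<forall>h\<in>H. br h y \<in> H" "\<forall>u\<in>U. br y u \<in> U"
    and v: "\<forall>h\<in>H. br h v \<in> U"
  shows "\<forall>h\<in>H. br h (br y v) \<in> U"
proof
  fix h assume "h \<in> H"
  then have "br (br h y) v \<in> U" "br y (br h v) \<in> U"
    using y v by blast+
  then show "br h (br y v) \<in> U"
    unfolding bracket_leibniz[of h y v] by (rule subspace_add[OF U])
qed

subsection \<open>Common complements\<close>

definition subalgebra_complement :: "'v set \<Rightarrow> 'v set \<Rightarrow> bool" where
  "subalgebra_complement M X \<longleftrightarrow> lie_subalgebra sc br M \<and> X \<inter> M = {0} \<and> set_plus_v X M = UNIV"

lemma minimal_ideal_Int_subalgebra: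
  assumes X: "minimal_ideal sc br X" and M: "lie_subalgebra sc br M" and "\<not> X \<subseteq> M"
    and YM: "set_plus_v Y M = UNIV" and Y: "\<forall>b\<in>Y. \<forall>a\<in>X. br b a = 0"
  shows "X \<inter> M = {0}"
proof -
  have "lie_ideal sc br (X \<inter> M)"
    unfolding lie_ideal_def
  proof (intro conjI allI ballI)
    show "subspace (X \<inter> M)"
      using X M by (simp add: subspace_inter minimal_ideal_subspace lie_subalgebra_subspace)
    fix z u assume u: "u \<in> X \<inter> M"
    obtain b m where "b \<in> Y" "m \<in> M" "z = b + m"
      using YM by (rule set_plus_v_UNIV_decompose)
    then have "br z u = br m u"
      using Y u by (simp add: bracket_add_left)
    also have "\<dots> \<in> X \<inter> M"
      using u \<open>m \<in> M\<close> minimal_ideal_lie_ideal[OF X] M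
      by (simp add: lie_ideal_bracket_mem lie_subalgebra_bracket_mem)
    finally show "br z u \<in> X \<inter> M" .
  qed
  then show ?thesis
    using minimal_ideal_Int_cases[OF X] \<open>\<not> X \<subseteq> M\<close> by blast
qed

lemma abelian_of_subalgebra_complement:
  assumes Y: "lie_ideal sc br Y" and XY: "\<forall>a\<in>X. \<forall>b\<in>Y. br a b = 0" and "abelian X"
    and M: "subalgebra_complement M X" and YM: "Y \<inter> M = {0}"
  shows "abelian Y"
  unfolding abelian_def
proof (intro ballI)
  fix b b' assume b: "b \<in> Y" and b': "b' \<in> Y"
  have XM: "set_plus_v X M = UNIV"
    using M unfolding subalgebra_complement_def by blast
  obtain a m a' m' where am: "a \<in> X" "m \<in> M" "b = a + m" and am': "a' \<in> X" "m' \<in> M" "b' = a' + m'"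
    using set_plus_v_UNIV_decompose[OF XM] by metis
  have "br a m' = br a b' - br a a'"
    using am' by (simp add: bracket_add_right)
  also have "\<dots> = 0"
    using XY \<open>abelian X\<close> am(1) am'(1) b' unfolding abelian_def by simp
  finally have "br a m' = 0" .
  moreover have "br b a' = 0"
    using XY am'(1) b by (subst bracket_antisym) simp
  ultimately have "br b b' = br m m'"
    using am am' by (simp add: bracket_add_left bracket_add_right)
  moreover have "br m m' \<in> M" "br b b' \<in> Y"
    using M am am' b' Y unfolding subalgebra_complement_def
    by (simp_all add: lie_subalgebra_bracket_mem lie_ideal_bracket_mem)
  ultimately show "br b b' = 0"
    using YM by auto
qed

lemma Int_set_plus_v_Int_subset_zero:
  assumes M': "subspace M'" and "X \<subseteq> M'" "X \<inter> M = {0}" "Y \<inter> M' = {0}"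
  shows "X \<inter> set_plus_v Y (M \<inter> M') \<subseteq> {0}"
proof
  fix a assume a: "a \<in> X \<inter> set_plus_v Y (M \<inter> M')"
  then obtain b c where bc: "b \<in> Y" "c \<in> M \<inter> M'" "a = b + c"
    unfolding Int_iff mem_set_plus_v by blast
  have "a - c \<in> M'"
    using a bc assms(2) by (blast intro: subspace_diff[OF M'])
  then have "b = 0"
    using bc assms(4) by auto
  then show "a \<in> {0}"
    using a bc assms(3) by auto
qed

lemma set_plus_v_Int_eq_UNIV:
  assumes M': "subspace M'" and "X \<subseteq> M'" "set_plus_v X M = UNIV" "set_plus_v Y M' = UNIV"
  shows "set_plus_v X (set_plus_v Y (M \<inter> M')) = UNIV"
proof -
  have "z \<in> set_plus_v X (set_plus_v Y (M \<inter> M'))" for z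
  proof -
    obtain b m' where bm': "b \<in> Y" "m' \<in> M'" "z = b + m'"
      using assms(4) by (rule set_plus_v_UNIV_decompose)
    obtain a m where am: "a \<in> X" "m \<in> M" "m' = a + m"
      using assms(3) by (rule set_plus_v_UNIV_decompose)
    have "m' - a \<in> M'"
      using bm' am assms(2) by (blast intro: subspace_diff[OF M'])
    then have "m \<in> M \<inter> M'"
      using am by simp
    then have "b + m \<in> set_plus_v Y (M \<inter> M')"
      unfolding mem_set_plus_v using bm'(1) by blast
    moreover have "z = a + (b + m)"
      using bm' am by (simp add: add_ac)
    ultimately show ?thesis
      unfolding mem_set_plus_v[of z] using am(1) by blast
  qed
  then show ?thesis
    by blast
qed

subsection \<open>Isomorphisms of chief factors\<close>

definition proj_along :: "'v set \<Rightarrow> 'v set \<Rightarrow> 'v \<Rightarrow> 'v" where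
  "proj_along S T z = (SOME t. t \<in> T \<and> z - t \<in> S)"

lemma proj_along_eq:
  assumes S: "subspace S" and T: "subspace T" and "S \<inter> T = {0}" and "s \<in> S" "t \<in> T"
  shows "proj_along S T (s + t) = t"
proof -
  have unique: "t' = t" if "t' \<in> T" "(s + t) - t' \<in> S" for t'
  proof -
    have "(s + t - t') - s \<in> S" "t - t' \<in> T"
      using subspace_diff[OF S that(2) \<open>s \<in> S\<close>] subspace_diff[OF T \<open>t \<in> T\<close> that(1)] .
    moreover have "(s + t - t') - s = t - t'"
      by (simp add: algebra_simps)
    ultimately have "t - t' \<in> S \<inter> T"
      by simp
    then show ?thesis
      using \<open>S \<inter> T = {0}\<close> by simp
  qed
  have "proj_along S T (s + t) \<in> T \<and> (s + t) - proj_along S T (s + t) \<in> S"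
    unfolding proj_along_def by (rule someI[of _ t]) (simp add: \<open>s \<in> S\<close> \<open>t \<in> T\<close>)
  then show ?thesis
    using unique by blast
qed

lemma factor_isoI:
  assumes "\<And>x. x \<in> A \<Longrightarrow> f x \<in> C"
    and "\<And>x y. x \<in> A \<Longrightarrow> y \<in> A \<Longrightarrow> f (x + y) = f x + f y"
    and "\<And>c x. x \<in> A \<Longrightarrow> f (sc c x) = sc c (f x)"
    and "\<And>x. x \<in> B \<Longrightarrow> f x \<in> D"
    and "\<And>x. x \<in> A \<Longrightarrow> f x \<in> D \<Longrightarrow> x \<in> B"
    and "\<And>y. y \<in> C \<Longrightarrow> \<exists>x\<in>A. y - f x \<in> D"
    and "\<And>z x. x \<in> A \<Longrightarrow> f (br z x) - br z (f x) \<in> D"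
  shows "factor_iso sc br (A, B) (C, D)"
  unfolding factor_iso_def prod.case using assms by blast

lemma factor_iso_projection:
  assumes S: "subspace S" and T: "lie_ideal sc br T" and ST: "S \<inter> T = {0}"
    and A: "A \<subseteq> set_plus_v S T" and B: "B = A \<inter> S"
    and onto: "\<forall>t\<in>T. \<exists>a\<in>A. a - t \<in> S"
    and invariant: "\<forall>z. \<forall>s\<in>S. \<forall>t\<in>T. s + t \<in> A \<longrightarrow> br z s \<in> S"
  shows "factor_iso sc br (A, B) (T, {0})"
proof -
  note sT = lie_ideal_subspace[OF T]
  let ?p = "proj_along S T"
  have p: "?p (s + t) = t" if "s \<in> S" "t \<in> T" for s t
    using proj_along_eq[OF S sT ST that] .
  have dec: "\<exists>s t. s \<in> S \<and> t \<in> T \<and> x = s + t" if "x \<in> A" for x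
    using subsetD[OF A that] unfolding mem_set_plus_v by blast
  show ?thesis
  proof (rule factor_isoI[where f = ?p])
    show "?p x \<in> T" if "x \<in> A" for x
      using dec[OF that] p by force
    show "?p (x + y) = ?p x + ?p y" if xy: "x \<in> A" "y \<in> A" for x y
    proof -
      obtain s t s' t' where "s \<in> S" "t \<in> T" "x = s + t" "s' \<in> S" "t' \<in> T" "y = s' + t'"
        using dec[OF xy(1)] dec[OF xy(2)] by blast
      then show ?thesis
        using S sT p p[of "s + s'" "t + t'"] by (simp add: subspace_add add_ac)
    qed
    show "?p (sc c x) = sc c (?p x)" if "x \<in> A" for c x
      using dec[OF that] S sT p by (force simp: scale_right_distrib subspace_scale)
    show "?p x \<in> {0}" if "x \<in> B" for x
      using that B p[of x 0] sT by (simp add: subspace_0)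
    show "x \<in> B" if "x \<in> A" "?p x \<in> {0}" for x
      using that B dec p by force
    show "\<exists>x\<in>A. t - ?p x \<in> {0}" if t: "t \<in> T" for t
    proof -
      obtain a where "a \<in> A" "a - t \<in> S"
        using onto t by blast
      moreover from this have "?p a = t"
        using p[of "a - t" t] t by simp
      ultimately show ?thesis
        by auto
    qed
    show "?p (br z x) - br z (?p x) \<in> {0}" if x: "x \<in> A" for z x
    proof -
      obtain s t where st: "s \<in> S" "t \<in> T" "x = s + t"
        using dec[OF x] by blast
      then have "br z x = br z s + br z t"
        by (simp add: bracket_add_right)
      moreover have "br z s \<in> S" "br z t \<in> T"
        using invariant st x lie_ideal_bracket_mem[OF T] by blast+
      ultimately show ?thesis
        using p st by simp
    qed
  qed
qed

lemma factor_iso_trans: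
  assumes A: "lie_ideal sc br A" and C: "lie_ideal sc br C" and F: "subspace F"
    and "factor_iso sc br (A, B) (C, D)" and "factor_iso sc br (C, D) (E, F)"
  shows "factor_iso sc br (A, B) (E, F)"
proof -
  obtain f where f: "\<forall>x\<in>A. f x \<in> C" "\<forall>x\<in>A. \<forall>y\<in>A. f (x + y) = f x + f y"
    "\<forall>c. \<forall>x\<in>A. f (sc c x) = sc c (f x)" "\<forall>x\<in>B. f x \<in> D" "\<forall>x\<in>A. f x \<in> D \<longrightarrow> x \<in> B"
    "\<forall>y\<in>C. \<exists>x\<in>A. y - f x \<in> D" "\<forall>z. \<forall>x\<in>A. f (br z x) - br z (f x) \<in> D"
    using assms(4) unfolding factor_iso_def by auto
  obtain g where g: "\<forall>x\<in>C. g x \<in> E" "\<forall>x\<in>C. \<forall>y\<in>C. g (x + y) = g x + g y"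
    "\<forall>c. \<forall>x\<in>C. g (sc c x) = sc c (g x)" "\<forall>x\<in>D. g x \<in> F" "\<forall>x\<in>C. g x \<in> F \<longrightarrow> x \<in> D"
    "\<forall>y\<in>E. \<exists>x\<in>C. y - g x \<in> F" "\<forall>z. \<forall>x\<in>C. g (br z x) - br z (g x) \<in> F"
    using assms(5) unfolding factor_iso_def by auto
  have g_diff: "g (u - v) = g u - g v" if "u \<in> C" "v \<in> C" for u v
    using additive_on_diff[OF g(2) subspace_diff[OF lie_ideal_subspace[OF C] that] that(2)] .
  show ?thesis
  proof (rule factor_isoI[where f = "g \<circ> f"])
    show "(g \<circ> f) x \<in> E" if "x \<in> A" for x
      using f(1) g(1) that by simp
    show "(g \<circ> f) (x + y) = (g \<circ> f) x + (g \<circ> f) y" if "x \<in> A" "y \<in> A" for x y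
      using f(1,2) g(2) that by simp
    show "(g \<circ> f) (sc c x) = sc c ((g \<circ> f) x)" if "x \<in> A" for c x
      using f(1,3) g(3) that by simp
    show "(g \<circ> f) x \<in> F" if "x \<in> B" for x
      using f(4) g(4) that by simp
    show "x \<in> B" if "x \<in> A" "(g \<circ> f) x \<in> F" for x
      using f(1,5) g(5) that by simp
    show "\<exists>x\<in>A. y - (g \<circ> f) x \<in> F" if y: "y \<in> E" for y
    proof -
      obtain c where c: "c \<in> C" "y - g c \<in> F"
        using g(6) y by blast
      obtain a where a: "a \<in> A" "c - f a \<in> D"
        using f(6) c(1) by blast
      have "y - g (f a) = (y - g c) + g (c - f a)"
        using g_diff[OF c(1) f(1)[rule_format, OF a(1)]] by simp
      also have "\<dots> \<in> F"
        using subspace_add[OF F c(2) g(4)[rule_format, OF a(2)]] .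
      finally show ?thesis
        using a(1) by auto
    qed
    show "(g \<circ> f) (br z x) - br z ((g \<circ> f) x) \<in> F" if x: "x \<in> A" for z x
    proof -
      have fx: "f (br z x) \<in> C" "br z (f x) \<in> C"
        using f(1)[rule_format, OF lie_ideal_bracket_mem[OF A x]]
          lie_ideal_bracket_mem[OF C f(1)[rule_format, OF x]] .
      have "g (f (br z x)) - br z (g (f x)) = g (f (br z x) - br z (f x)) + (g (br z (f x)) - br z (g (f x)))"
        using g_diff[OF fx] by simp
      also have "\<dots> \<in> F"
        using subspace_add[OF F g(4)[rule_format, OF f(7)[rule_format, OF x]]
            g(7)[rule_format, OF f(1)[rule_format, OF x]]] .
      finally show ?thesis
        by simp
    qed
  qed
qed

lemma factor_iso_inclusion:
  assumes X: "lie_ideal sc br X" and Y: "lie_ideal sc br Y" and XY: "X \<inter> Y = {0}"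
  shows "factor_iso sc br (X, {0}) (set_plus_v X Y, Y)"
proof -
  have "0 \<in> Y"
    using Y lie_ideal_subspace subspace_0 by blast
  then show ?thesis
    unfolding factor_iso_def prod.case using XY
    by (intro exI[of _ "\<lambda>x. x"]) (force simp: mem_set_plus_v)
qed

lemma factor_iso_set_plus_v_quotient:
  assumes X: "lie_ideal sc br X" and Y: "lie_ideal sc br Y" and XY: "X \<inter> Y = {0}"
  shows "factor_iso sc br (set_plus_v X Y, X) (Y, {0})"
proof (rule factor_iso_projection[OF lie_ideal_subspace[OF X] Y XY])
  have "0 \<in> X" "0 \<in> Y"
    using X Y lie_ideal_subspace subspace_0 by blast+
  then show "X = set_plus_v X Y \<inter> X"
    using subset_set_plus_v by blast
  show "\<forall>t\<in>Y. \<exists>a\<in>set_plus_v X Y. a - t \<in> X"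
    using \<open>0 \<in> X\<close> by (force simp: mem_set_plus_v)
  show "\<forall>z. \<forall>s\<in>X. \<forall>t\<in>Y. s + t \<in> set_plus_v X Y \<longrightarrow> br z s \<in> X"
    using X lie_ideal_bracket_mem by blast
qed simp

lemma factor_iso_subalgebra_complement:
  assumes X: "lie_ideal sc br X" and Y: "lie_ideal sc br Y"
    and YX: "\<forall>b\<in>Y. \<forall>a\<in>X. br b a = 0" and "abelian Y"
    and MX: "subalgebra_complement M X" and MY: "subalgebra_complement M Y"
  shows "factor_iso sc br (X, {0}) (Y, {0})"
proof -
  have M: "lie_subalgebra sc br M" and XM: "X \<inter> M = {0}" "set_plus_v X M = UNIV"
    and YM: "Y \<inter> M = {0}" "set_plus_v Y M = UNIV"
    using MX MY unfolding subalgebra_complement_def by auto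
  show ?thesis
  proof (rule factor_iso_projection[OF lie_subalgebra_subspace[OF M] Y])
    show "M \<inter> Y = {0}" "X \<subseteq> set_plus_v M Y" "{0} = X \<inter> M"
      using YM XM by (auto simp: set_plus_v_commute)
    show "\<forall>t\<in>Y. \<exists>a\<in>X. a - t \<in> M"
    proof
      fix t assume "t \<in> Y"
      obtain a m where am: "a \<in> X" "m \<in> M" "t = a + m"
        using XM(2) by (rule set_plus_v_UNIV_decompose)
      then have "a - t \<in> M"
        using subspace_neg[OF lie_subalgebra_subspace[OF M]] by simp
      then show "\<exists>a\<in>X. a - t \<in> M"
        using am(1) by blast
    qed
    show "\<forall>z. \<forall>s\<in>M. \<forall>t\<in>Y. s + t \<in> X \<longrightarrow> br z s \<in> M"
    proof (intro allI ballI impI)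
      fix z s t assume s: "s \<in> M" and t: "t \<in> Y" and st: "s + t \<in> X"
      obtain b m where bm: "b \<in> Y" "m \<in> M" "z = b + m"
        using YM(2) by (rule set_plus_v_UNIV_decompose)
      have "br b s = br b (s + t) - br b t"
        by (simp add: bracket_add_right)
      also have "\<dots> = 0"
        using YX \<open>abelian Y\<close> bm(1) t st unfolding abelian_def by simp
      finally have "br z s = br m s"
        using bm(3) by (simp add: bracket_add_left)
      then show "br z s \<in> M"
        using M bm(2) s by (simp add: lie_subalgebra_bracket_mem)
    qed
  qed
qed

lemma factor_iso_quotients_of_sum:
  assumes X: "lie_ideal sc br X" and Y: "lie_ideal sc br Y" and XY: "X \<inter> Y = {0}"
    and iso: "factor_iso sc br (Y, {0}) (X, {0})"
  shows "factor_iso sc br (set_plus_v X Y, X) (set_plus_v X Y, Y)"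
proof -
  have "factor_iso sc br (set_plus_v X Y, X) (X, {0})"
    using factor_iso_trans[OF lie_ideal_set_plus_v[OF X Y] Y subspace_single_0
        factor_iso_set_plus_v_quotient[OF X Y XY] iso] .
  then show ?thesis
    using factor_iso_trans[OF lie_ideal_set_plus_v[OF X Y] X lie_ideal_subspace[OF Y]
        _ factor_iso_inclusion[OF X Y XY]] by blast
qed

definition matched :: "'v set \<times> 'v set \<Rightarrow> 'v set \<times> 'v set \<Rightarrow> bool" where
  "matched p q \<longleftrightarrow> factor_iso sc br p q \<and> (frattini_chief_factor sc br p \<longleftrightarrow> frattini_chief_factor sc br q)"

lemma crossed_matching:
  assumes X: "minimal_ideal sc br X" and Y: "minimal_ideal sc br Y" and "X \<noteq> Y"
    and "in_maximals_over {0} X \<longleftrightarrow> in_maximals_over Y X"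
    and "in_maximals_over {0} Y \<longleftrightarrow> in_maximals_over X Y"
  shows "matched (X, {0}) (set_plus_v X Y, Y) \<and> matched (set_plus_v X Y, X) (Y, {0})"
proof -
  note ideals = minimal_ideal_lie_ideal[OF X] minimal_ideal_lie_ideal[OF Y]
  have XY: "X \<inter> Y = {0}"
    using minimal_ideals_Int assms by blast
  have "frattini_chief_factor sc br (set_plus_v X Y, X) \<longleftrightarrow> in_maximals_over X Y"
    using frattini_chief_factor_set_plus_v_iff[OF Y X] assms(3) by (simp add: set_plus_v_commute)
  then show ?thesis
    unfolding matched_def using assms(4,5) ideals XY
    by (simp add: factor_iso_inclusion factor_iso_set_plus_v_quotient
        frattini_chief_factor_minimal_ideal_iff[OF X] frattini_chief_factor_minimal_ideal_iff[OF Y]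
        frattini_chief_factor_set_plus_v_iff[OF X Y \<open>X \<noteq> Y\<close>])
qed

lemma straight_matching:
  assumes X: "minimal_ideal sc br X" and Y: "minimal_ideal sc br Y" and "X \<noteq> Y"
    and "abelian X" "abelian Y" and MX: "subalgebra_complement M X" and MY: "subalgebra_complement M Y"
    and "in_maximals_over {0} X \<longleftrightarrow> in_maximals_over {0} Y"
    and "in_maximals_over Y X \<longleftrightarrow> in_maximals_over X Y"
  shows "matched (X, {0}) (Y, {0}) \<and> matched (set_plus_v X Y, X) (set_plus_v X Y, Y)"
proof -
  note ideals = minimal_ideal_lie_ideal[OF X] minimal_ideal_lie_ideal[OF Y]
  have XY: "X \<inter> Y = {0}"
    using minimal_ideals_Int assms by blast
  have "\<forall>b\<in>Y. \<forall>a\<in>X. br b a = 0" "\<forall>a\<in>X. \<forall>b\<in>Y. br a b = 0"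
    using minimal_ideals_commute assms by blast+
  then have "factor_iso sc br (X, {0}) (Y, {0})" "factor_iso sc br (Y, {0}) (X, {0})"
    using factor_iso_subalgebra_complement ideals \<open>abelian X\<close> \<open>abelian Y\<close> MX MY by blast+
  moreover have "frattini_chief_factor sc br (set_plus_v X Y, X) \<longleftrightarrow> in_maximals_over X Y"
    using frattini_chief_factor_set_plus_v_iff[OF Y X] assms(3) by (simp add: set_plus_v_commute)
  ultimately show ?thesis
    unfolding matched_def using assms(8,9) ideals XY
    by (simp add: factor_iso_quotients_of_sum
        frattini_chief_factor_minimal_ideal_iff[OF X] frattini_chief_factor_minimal_ideal_iff[OF Y]
        frattini_chief_factor_set_plus_v_iff[OF X Y \<open>X \<noteq> Y\<close>])
qed

end

section \<open>Finite-dimensional Lie algebras\<close>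

lemma fin_dim_ex_basis:
  assumes "vector_space sc" and "fin_dim sc"
  shows "\<exists>B. finite_dimensional_vector_space sc B"
proof -
  interpret vector_space sc by fact
  obtain S where S: "finite S" "span S = UNIV"
    using assms(2) unfolding fin_dim_def by blast
  obtain B where B: "B \<subseteq> S" "independent B" "S \<subseteq> span B"
    using maximal_independent_subset[of S] by blast
  then have "span B = UNIV"
    using S(2) span_minimal subspace_span by blast
  then show ?thesis
    using B S(1) finite_subset by (blast intro: finite_dimensional_vector_space.intro
        finite_dimensional_vector_space_axioms.intro vector_space_axioms)
qed

locale fd_lie_alg = lie_alg sc br + finite_dimensional_vector_space sc Basis
  for sc :: "'k::field \<Rightarrow> 'v::ab_group_add \<Rightarrow> 'v" and br :: "'v \<Rightarrow> 'v \<Rightarrow> 'v" and Basis :: "'v set"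
begin

lemma ex_maximal_subspace:
  assumes "R S0" "\<And>S. R S \<Longrightarrow> subspace S"
  shows "\<exists>M. R M \<and> (\<forall>S. R S \<and> M \<subseteq> S \<longrightarrow> S = M)"
proof -
  obtain M where M: "R M" and greatest: "\<And>S. R S \<Longrightarrow> dim S \<le> dim M"
    using Lattices_Big.ex_has_greatest_nat[of R S0 dim "Suc dimension"] assms(1) dim_subset_UNIV
    by (meson le_imp_less_Suc)
  have "S = M" if "R S" "M \<subseteq> S" for S
    using subspace_dim_equal[of M S] assms(2) that M greatest by blast
  then show ?thesis
    using M by blast
qed

lemma ex_maximal_subalgebra:
  assumes "lie_subalgebra sc br N" "N \<noteq> UNIV"
  shows "\<exists>M. maximal_subalgebra M \<and> N \<subseteq> M"
proof -
  obtain M where "lie_subalgebra sc br M \<and> N \<subseteq> M \<and> M \<noteq> UNIV"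
    and "\<forall>S. (lie_subalgebra sc br S \<and> N \<subseteq> S \<and> S \<noteq> UNIV) \<and> M \<subseteq> S \<longrightarrow> S = M"
    using ex_maximal_subspace[of "\<lambda>S. lie_subalgebra sc br S \<and> N \<subseteq> S \<and> S \<noteq> UNIV" N]
      assms lie_subalgebra_subspace by blast
  then show ?thesis
    unfolding maximal_subalgebra_def by blast
qed

text \<open>The images of the powers of \<open>ad x\<close> decrease, so by finite dimension they stabilise
  at some \<open>n \<ge> 1\<close>; then \<open>ad x ^ n\<close> maps its image onto itself, which splits off \<open>y\<close>.\<close>
lemma fitting_decomposition: "\<exists>n\<ge>1. \<exists>u. y - (br x ^^ n) u \<in> fitting_null x"
proof -
  define I where "I n = range (br x ^^ n)" for n
  have subspace_I: "subspace (I n)" for n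
    unfolding I_def by (rule module_hom.subspace_image[OF module_hom_ad_pow subspace_UNIV])
  have I_antimono: "I (m + n) \<subseteq> I m" for m n
    unfolding I_def by (auto simp: funpow_add)
  obtain N where N: "N \<ge> 1" and N_least: "\<And>m. m \<ge> 1 \<Longrightarrow> dim (I N) \<le> dim (I m)"
    using ex_has_least_nat[of "\<lambda>n. n \<ge> 1" 1 "\<lambda>n. dim (I n)"] by auto
  have "I (N + N) = I N"
    using subspace_dim_equal[OF subspace_I subspace_I I_antimono] N_least[of "N + N"] N by simp
  then obtain u where u: "(br x ^^ N) y = (br x ^^ (N + N)) u"
    unfolding I_def by (metis rangeI rangeE)
  have "(br x ^^ N) (y - (br x ^^ N) u) = 0"
    using u by (simp add: ad_pow_diff funpow_add)
  then show ?thesis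
    using N unfolding fitting_null_def by blast
qed

lemma ex_maximal_proper_subalgebra:
  assumes K: "lie_subalgebra sc br K" and "\<not> K \<subseteq> {0}"
  obtains H where "lie_subalgebra sc br H" "H \<subset> K"
    "\<forall>S. lie_subalgebra sc br S \<and> H \<subseteq> S \<and> S \<subset> K \<longrightarrow> S = H"
proof -
  define R where "R S \<longleftrightarrow> lie_subalgebra sc br S \<and> S \<subset> K" for S
  have "lie_subalgebra sc br {0}"
    by (simp add: lie_subalgebra_def)
  moreover have "{0} \<subset> K"
    using assms(2) subspace_0[OF lie_subalgebra_subspace[OF K]] by blast
  ultimately have "R {0}"
    unfolding R_def by blast
  moreover have "subspace S" if "R S" for S
    using that lie_subalgebra_subspace unfolding R_def by blast
  ultimately obtain H where H: "R H" "\<forall>S. R S \<and> H \<subseteq> S \<longrightarrow> S = H"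
    using ex_maximal_subspace[of R "{0}"] by auto
  have "lie_subalgebra sc br H" "H \<subset> K"
    using H(1) unfolding R_def by auto
  moreover have "\<forall>S. lie_subalgebra sc br S \<and> H \<subseteq> S \<and> S \<subset> K \<longrightarrow> S = H"
    using H(2) unfolding R_def by blast
  ultimately show ?thesis
    by (rule that)
qed

lemma maximal_proper_subalgebra_extend:
  assumes K: "lie_subalgebra sc br K" and H: "lie_subalgebra sc br H" "H \<subseteq> K"
    and H_max: "\<forall>S. lie_subalgebra sc br S \<and> H \<subseteq> S \<and> S \<subset> K \<longrightarrow> S = H"
    and y: "y \<in> K" "y \<notin> H" "\<forall>h\<in>H. br h y \<in> H"
  shows "set_plus_v H (span {y}) = K"
proof -
  let ?H' = "set_plus_v H (span {y})"
  have "H \<subseteq> ?H'"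
    by (simp add: subset_set_plus_v span_zero)
  moreover have "y \<in> ?H'"
    using subspace_0[OF lie_subalgebra_subspace[OF H(1)]] span_base[of y "{y}"]
    unfolding mem_set_plus_v by force
  moreover have "?H' \<subseteq> K"
    using K H y by (simp add: set_plus_v_subset lie_subalgebra_subspace span_minimal)
  ultimately show ?thesis
    using H_max lie_subalgebra_add_normalizing[OF H(1) y(3)] y(2) by blast
qed

lemma annihilated_vector_extend:
  assumes U: "subspace U" and K: "K = set_plus_v H (span {y})" and y: "\<forall>h\<in>H. br h y \<in> H"
    and y_nil: "fitting_null y = UNIV" and V: "\<forall>v\<in>V. br y v \<in> V" "\<forall>u\<in>U. br y u \<in> U"
    and w0: "w0 \<in> V" "w0 \<notin> U" "\<forall>h\<in>H. br h w0 \<in> U"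
  shows "\<exists>w\<in>V. w \<notin> U \<and> (\<forall>k\<in>K. br k w \<in> U)"
proof -
  define W where "W = {v \<in> V. \<forall>h\<in>H. br h v \<in> U}"
  obtain n where "(br y ^^ n) w0 = 0"
    using y_nil unfolding fitting_null_def by blast
  moreover have "\<forall>v\<in>W. br y v \<in> W"
    using bracket_annihilator_invariant[OF U y V(2)] V(1) unfolding W_def by blast
  ultimately obtain w where w: "w \<in> W" "w \<notin> U" "br y w \<in> U"
    using funpow_leaves_subset[of w0 W U n "br y"] w0 subspace_0[OF U] unfolding W_def by auto
  have "br k w \<in> U" if k: "k \<in> K" for k
  proof -
    obtain h c where "h \<in> H" "k = h + sc c y"
      using k unfolding K mem_set_plus_v span_singleton by blast
    then show ?thesis
      using w U unfolding W_def
      by (simp add: bracket_add_left bracket_scale_left subspace_add subspace_scale)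
  qed
  then show ?thesis
    using w unfolding W_def by blast
qed

text \<open>Weak Engel theorem, by induction on \<open>dim K\<close>: a maximal proper subalgebra \<open>H\<close> of \<open>K\<close>
  is normalised by some \<open>y\<close> with \<open>K = H + span {y}\<close>, and \<open>ad y\<close> acts nilpotently on the
  \<open>y\<close>-invariant space of vectors that \<open>H\<close> maps into \<open>U\<close>.\<close>
lemma engel:
  assumes "lie_subalgebra sc br K" "subspace U" "U \<subset> V"
    "\<forall>k\<in>K. \<forall>v\<in>V. br k v \<in> V" "\<forall>k\<in>K. \<forall>u\<in>U. br k u \<in> U"
    "\<forall>k\<in>K. fitting_null k = UNIV"
  shows "\<exists>v\<in>V. v \<notin> U \<and> (\<forall>k\<in>K. br k v \<in> U)"
  using assms
proof (induction "dim K" arbitrary: K V U rule: less_induct)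
  case less
  note K = less.prems(1)
  show ?case
  proof (cases "K \<subseteq> {0}")
    case True
    obtain v where "v \<in> V" "v \<notin> U"
      using less.prems(3) by blast
    then show ?thesis
      using True subspace_0[OF less.prems(2)] by (intro bexI[of _ v]) auto
  next
    case False
    then obtain H where H: "lie_subalgebra sc br H" "H \<subset> K"
      and H_max: "\<forall>S. lie_subalgebra sc br S \<and> H \<subseteq> S \<and> S \<subset> K \<longrightarrow> S = H"
      using ex_maximal_proper_subalgebra[OF K] by blast
    have "span H = H" "span K = K"
      using H(1) K by (simp_all add: span_eq_iff lie_subalgebra_subspace)
    then have "span H \<subset> span K"
      using H(2) by (simp only:)
    then have dim_H: "dim H < dim K"
      by (rule dim_psubset)
    have nil_H: "\<forall>h\<in>H. fitting_null h = UNIV"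
      using less.prems(6) H(2) by blast
    have HK: "\<forall>h\<in>H. \<forall>v\<in>K. br h v \<in> K" and HH: "\<forall>h\<in>H. \<forall>u\<in>H. br h u \<in> H"
      using H by (auto intro: lie_subalgebra_bracket_mem[OF K] lie_subalgebra_bracket_mem[OF H(1)])
    obtain y where y: "y \<in> K" "y \<notin> H" "\<forall>h\<in>H. br h y \<in> H"
      using less.hyps[OF dim_H H(1) lie_subalgebra_subspace[OF H(1)] H(2) HK HH nil_H] by blast
    have HV: "\<forall>h\<in>H. \<forall>v\<in>V. br h v \<in> V" and HU: "\<forall>h\<in>H. \<forall>u\<in>U. br h u \<in> U"
      using less.prems(4,5) H(2) by blast+
    obtain w0 where w0: "w0 \<in> V" "w0 \<notin> U" "\<forall>h\<in>H. br h w0 \<in> U"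
      using less.hyps[OF dim_H H(1) less.prems(2,3) HV HU nil_H] by blast
    have "set_plus_v H (span {y}) = K"
      using maximal_proper_subalgebra_extend[OF K H(1) psubset_imp_subset[OF H(2)] H_max y] .
    from annihilated_vector_extend[OF less.prems(2) this[symmetric] y(3) bspec[OF less.prems(6) y(1)]
        bspec[OF less.prems(4) y(1)] bspec[OF less.prems(5) y(1)] w0]
    show ?thesis .
  qed
qed

lemma minimal_ideal_abelian_of_annihilated:
  assumes X: "minimal_ideal sc br X" and v: "v \<in> X" "v \<noteq> 0" "\<forall>k\<in>X. br k v = 0"
  shows "abelian X"
proof -
  define Z where "Z = {z \<in> X. \<forall>k\<in>X. br k z = 0}"
  note X_ideal = minimal_ideal_lie_ideal[OF X] and sX = minimal_ideal_subspace[OF X]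
  have "lie_ideal sc br Z"
    unfolding lie_ideal_def
  proof (intro conjI allI ballI)
    show "subspace Z"
      using sX unfolding Z_def subspace_def by (simp add: bracket_add_right bracket_scale_right)
    fix w z assume z: "z \<in> Z"
    have "br k (br w z) = 0" if "k \<in> X" for k
      using z that lie_ideal_bracket_mem_left[OF X_ideal that]
      unfolding Z_def bracket_leibniz[of k w z] by simp
    then show "br w z \<in> Z"
      using z lie_ideal_bracket_mem[OF X_ideal] unfolding Z_def by blast
  qed
  moreover have "Z \<noteq> {0}" "Z \<subseteq> X"
    using v unfolding Z_def by auto
  ultimately have "Z = X"
    using minimal_ideal_Int_cases[OF X] by blast
  then show ?thesis
    unfolding Z_def abelian_def by blast
qed

lemma fitting_null_UNIV_of_in_maximals_over:
  assumes X: "lie_ideal sc br X" and k: "k \<in> X" and Y: "\<forall>b\<in>Y. br k b = 0"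
    and in_max: "in_maximals_over Y X"
  shows "fitting_null k = UNIV"
proof (rule ccontr)
  assume "fitting_null k \<noteq> UNIV"
  then obtain M where M: "maximal_subalgebra M" "fitting_null k \<subseteq> M"
    using ex_maximal_subalgebra[OF lie_subalgebra_fitting_null] by blast
  have "Y \<subseteq> fitting_null k"
    using Y unfolding fitting_null_def by (auto intro!: exI[of _ "Suc 0"])
  then have XM: "X \<subseteq> M"
    using in_max M unfolding in_maximals_over_def by blast
  have "y \<in> M" for y
  proof -
    obtain n u where n: "n \<ge> 1" and u: "y - (br k ^^ n) u \<in> fitting_null k"
      using fitting_decomposition by blast
    from n obtain m where "n = Suc m"
      by (cases n) auto
    then have "(br k ^^ n) u \<in> X"
      using lie_ideal_bracket_mem_left[OF X k] by simp
    with u have "(y - (br k ^^ n) u) + (br k ^^ n) u \<in> M"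
      using M(2) XM by (blast intro: subspace_add[OF maximal_subalgebra_subspace[OF M(1)]])
    then show ?thesis
      by simp
  qed
  then show False
    using M(1) unfolding maximal_subalgebra_def by blast
qed

lemma abelian_of_in_maximals_over:
  assumes X: "minimal_ideal sc br X" and Y: "\<forall>a\<in>X. \<forall>b\<in>Y. br a b = 0"
    and in_max: "in_maximals_over Y X"
  shows "abelian X"
proof -
  note X_ideal = minimal_ideal_lie_ideal[OF X]
  have "\<exists>v\<in>X. v \<notin> {0} \<and> (\<forall>k\<in>X. br k v \<in> {0})"
  proof (rule engel)
    show "lie_subalgebra sc br X"
      using lie_ideal_subalgebra[OF X_ideal] .
    show "subspace {0}" "{0} \<subset> X"
      using X subspace_0[OF minimal_ideal_subspace[OF X]] unfolding minimal_ideal_def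
      by (auto simp: subspace_def)
    show "\<forall>k\<in>X. \<forall>v\<in>X. br k v \<in> X" "\<forall>k\<in>X. \<forall>u\<in>{0}. br k u \<in> {0}"
      using lie_ideal_bracket_mem[OF X_ideal] by auto
    show "\<forall>k\<in>X. fitting_null k = UNIV"
      using fitting_null_UNIV_of_in_maximals_over[OF X_ideal _ _ in_max] Y by blast
  qed
  then show ?thesis
    using minimal_ideal_abelian_of_annihilated[OF X] by auto
qed

lemma in_maximals_over_swap:
  assumes X: "minimal_ideal sc br X" and Y: "minimal_ideal sc br Y"
    and "abelian Y" and in_max: "in_maximals_over Y X" and M: "subalgebra_complement M X"
  shows "in_maximals_over X Y"
  unfolding in_maximals_over_def
proof (intro allI impI)
  fix M' assume M': "maximal_subalgebra M'" and XM': "X \<subseteq> M'"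
  note sM' = maximal_subalgebra_subspace[OF M']
  have XM: "X \<inter> M = {0}" "set_plus_v X M = UNIV"
    using M unfolding subalgebra_complement_def by blast+
  show "Y \<subseteq> M'"
  proof (rule ccontr)
    assume "\<not> Y \<subseteq> M'"
    then have YM': "set_plus_v Y M' = UNIV"
      using maximal_subalgebra_set_plus_v[OF M' minimal_ideal_lie_ideal[OF Y]] by blast
    have "Y \<inter> M' = {0}"
      using minimal_ideal_Int_subalgebra[OF Y maximal_subalgebra_subalgebra[OF M'] \<open>\<not> Y \<subseteq> M'\<close> YM']
        \<open>abelian Y\<close> unfolding abelian_def by blast
    define N where "N = set_plus_v Y (M \<inter> M')"
    have "lie_subalgebra sc br N"
      using M M' minimal_ideal_lie_ideal[OF Y] unfolding N_def subalgebra_complement_def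
      by (simp add: lie_subalgebra_set_plus_v lie_subalgebra_Int maximal_subalgebra_subalgebra)
    moreover have "N \<noteq> UNIV"
    proof -
      have "X \<inter> N \<subseteq> {0}"
        using Int_set_plus_v_Int_subset_zero[OF sM' XM' XM(1) \<open>Y \<inter> M' = {0}\<close>] unfolding N_def .
      moreover have "\<not> X \<subseteq> {0}"
        using X subspace_0[OF minimal_ideal_subspace[OF X]] unfolding minimal_ideal_def by blast
      ultimately show ?thesis
        by blast
    qed
    ultimately obtain M'' where M'': "maximal_subalgebra M''" "N \<subseteq> M''"
      using ex_maximal_subalgebra by blast
    have "Y \<subseteq> N"
      unfolding N_def using M sM' subalgebra_complement_def
      by (simp add: subset_set_plus_v subspace_0 lie_subalgebra_subspace)
    then have "X \<subseteq> M''"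
      using in_max M'' unfolding in_maximals_over_def by blast
    then have "set_plus_v X N \<subseteq> M''"
      using M'' by (simp add: set_plus_v_subset maximal_subalgebra_subspace)
    moreover have "set_plus_v X N = UNIV"
      using set_plus_v_Int_eq_UNIV[OF sM' XM' XM(2) YM'] unfolding N_def .
    ultimately show False
      using M''(1) unfolding maximal_subalgebra_def by blast
  qed
qed

lemma non_frattini_pair:
  assumes X: "minimal_ideal sc br X" and Y: "minimal_ideal sc br Y" and "X \<noteq> Y"
    and in_max: "in_maximals_over Y X" and not_frattini: "\<not> in_maximals_over {0} X"
  shows "\<not> in_maximals_over {0} Y \<and> in_maximals_over X Y \<and> abelian X \<and> abelian Y \<and>
    (\<exists>M. subalgebra_complement M X \<and> subalgebra_complement M Y)"
proof -
  note ideals = minimal_ideal_lie_ideal[OF X] minimal_ideal_lie_ideal[OF Y]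
  have XY: "\<forall>a\<in>X. \<forall>b\<in>Y. br a b = 0" and YX: "\<forall>b\<in>Y. \<forall>a\<in>X. br b a = 0"
    using minimal_ideals_commute assms by blast+
  obtain M where M: "maximal_subalgebra M" and "\<not> X \<subseteq> M"
    using not_frattini maximal_subalgebra_subspace subspace_0 unfolding in_maximals_over_def by blast
  moreover from this have "\<not> Y \<subseteq> M"
    using in_max unfolding in_maximals_over_def by blast
  ultimately have "set_plus_v X M = UNIV" "set_plus_v Y M = UNIV"
    using maximal_subalgebra_set_plus_v ideals by blast+
  moreover from calculation have "X \<inter> M = {0}" "Y \<inter> M = {0}"
    using minimal_ideal_Int_subalgebra[OF _ maximal_subalgebra_subalgebra[OF M]] X Y XY YX
      \<open>\<not> X \<subseteq> M\<close> \<open>\<not> Y \<subseteq> M\<close> by blast+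
  ultimately have complements: "subalgebra_complement M X" "subalgebra_complement M Y"
    using M by (simp_all add: subalgebra_complement_def maximal_subalgebra_subalgebra)
  have "abelian X"
    using abelian_of_in_maximals_over[OF X XY in_max] .
  then have "abelian Y"
    using abelian_of_subalgebra_complement[OF ideals(2) XY _ complements(1)] complements(2)
    unfolding subalgebra_complement_def by blast
  moreover have "in_maximals_over X Y"
    using in_maximals_over_swap[OF X Y \<open>abelian Y\<close> in_max complements(1)] .
  moreover have "\<not> in_maximals_over {0} Y"
    using M \<open>\<not> Y \<subseteq> M\<close> maximal_subalgebra_subspace subspace_0 unfolding in_maximals_over_def by blast
  ultimately show ?thesis
    using \<open>abelian X\<close> complements by blast
qed

lemma minimal_ideals_matching:
  assumes X: "minimal_ideal sc br X" and Y: "minimal_ideal sc br Y" and "X \<noteq> Y"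
  shows "\<exists>\<theta>. bij_betw \<theta> {(X, {0}), (set_plus_v X Y, X)} {(Y, {0}), (set_plus_v X Y, Y)}
    \<and> (\<forall>p\<in>{(X, {0}), (set_plus_v X Y, X)}. matched p (\<theta> p))"
proof -
  have distinct: "(X, {0}) \<noteq> (set_plus_v X Y, X)" "(Y, {0}) \<noteq> (set_plus_v X Y, Y)"
    using X Y unfolding minimal_ideal_def by auto
  show ?thesis
  proof (cases "(in_maximals_over {0} X \<longleftrightarrow> in_maximals_over Y X) \<and>
      (in_maximals_over {0} Y \<longleftrightarrow> in_maximals_over X Y)")
    case True
    then have "\<exists>\<theta>. bij_betw \<theta> {(X, {0}), (set_plus_v X Y, X)} {(set_plus_v X Y, Y), (Y, {0})}
        \<and> (\<forall>p\<in>{(X, {0}), (set_plus_v X Y, X)}. matched p (\<theta> p))"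
      using bij_betw_pair[OF distinct(1) distinct(2)[symmetric]] crossed_matching[OF X Y \<open>X \<noteq> Y\<close>]
      by blast
    then show ?thesis
      by (simp add: insert_commute)
  next
    case False
    have "0 \<in> X" "0 \<in> Y"
      using X Y minimal_ideal_subspace subspace_0 by blast+
    then have "in_maximals_over Y X \<and> \<not> in_maximals_over {0} X \<or>
        in_maximals_over X Y \<and> \<not> in_maximals_over {0} Y"
      using False in_maximals_over_mono[of "{0}" Y X] in_maximals_over_mono[of "{0}" X Y] by blast
    then have "\<not> in_maximals_over {0} X \<and> \<not> in_maximals_over {0} Y \<and>
        in_maximals_over Y X \<and> in_maximals_over X Y \<and> abelian X \<and> abelian Y \<and>
        (\<exists>M. subalgebra_complement M X \<and> subalgebra_complement M Y)"
      using non_frattini_pair[OF X Y \<open>X \<noteq> Y\<close>] non_frattini_pair[OF Y X \<open>X \<noteq> Y\<close>[symmetric]] by blast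
    then show ?thesis
      using bij_betw_pair[OF distinct] straight_matching[OF X Y \<open>X \<noteq> Y\<close>] by blast
  qed
qed

end

theorem lemma2p3:
  fixes sc :: "'k::field \<Rightarrow> 'v::ab_group_add \<Rightarrow> 'v" and br :: "'v \<Rightarrow> 'v \<Rightarrow> 'v"
    and A1 A2 :: "'v set"
  assumes "lie_algebra sc br" and "fin_dim sc"
    and "minimal_ideal sc br A1" and "minimal_ideal sc br A2" and "A1 \<noteq> A2"
  shows "\<exists>\<theta>. bij_betw \<theta> {(A1, {0}), (set_plus_v A1 A2, A1)} {(A2, {0}), (set_plus_v A1 A2, A2)}
      \<and> (\<forall>p\<in>{(A1, {0}), (set_plus_v A1 A2, A1)}.
           factor_iso sc br p (\<theta> p)
           \<and> (frattini_chief_factor sc br p \<longleftrightarrow> frattini_chief_factor sc br (\<theta> p)))"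
proof -
  have lie: "lie_alg sc br"
    using assms(1) unfolding lie_algebra_def lie_alg_def lie_alg_axioms_def by blast
  obtain B where "finite_dimensional_vector_space sc B"
    using fin_dim_ex_basis[OF lie_alg.axioms(1)[OF lie] assms(2)] by blast
  then interpret fd_lie_alg sc br B
    using lie by (simp add: fd_lie_alg_def)
  show ?thesis
    using minimal_ideals_matching[OF assms(3-5)] unfolding matched_def .
qed

end
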